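(* Let $T,\nu,M_t$ be integers with $\nu\ge 0$, $M_t\ge1$ and $T\ge M_t(\nu+1)$. Let $\alpha$ be a primitive element of $\mathbb{F}_{2^T}$, $\xi=\alpha^{\nu+1}$, and $(\theta_0,\dots,\theta_{T-1})$ the trace dual basis of $(\alpha^0,\dots,\alpha^{T-1})$. For $f_0\in\mathbb{F}_{2^T}$ let $f(x)=f_0x$ and let $\mathcal{S}=\{f_0\in\mathbb{F}_{2^T}:\ \mathrm{Tr}(\theta_if(\xi^j))=0\ \forall i\in\{T-\nu,\dots,T-1\},\ \forall j\in\{1,\dots,M_t\}\}$. Then $\frac{1}{T}\log_2|\mathcal{S}|\ge 1-\frac{\nu M_t}{T}$, and for every $f\in\mathcal{S}$ with $f_0\neq0$, $\operatorname{rank}_{\mathbb{F}_2}(\mathbf{U}_f)\ge M_t(\nu+1)$.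
   Context: $\mathrm{Tr}$ is the trace from $\mathbb{F}_{2^T}$ to $\mathbb{F}_2$; the trace dual basis satisfies $\mathrm{Tr}(\theta_i\alpha^j)=\delta_{ij}$. For $f$ let $\mathbf{c}_f=(f(1),f(\xi),\dots,f(\xi^{M_t-1}))^t\in\mathbb{F}_{2^T}^{M_t}$ and $\mathbf{u}_f=(\mathbf{c}_f^t,\alpha\mathbf{c}_f^t,\dots,\alpha^\nu\mathbf{c}_f^t)^t\in\mathbb{F}_{2^T}^{(\nu+1)M_t}$. $\mathbf{U}_f\in\mathbb{F}_2^{(\nu+1)M_t\times T}$ is the binary matrix whose $r$-th row is the coordinate vector of the $r$-th entry of $\mathbf{u}_f$ with respect to the basis $(\alpha^0,\alpha^1,\dots,\alpha^{T-1})$ of $\mathbb{F}_{2^T}$ over $\mathbb{F}_2$. *)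

theory Defs
  imports "Jordan_Normal_Form.DL_Rank" "HOL-Library.Z2"
begin

definition trace2 :: "nat \<Rightarrow> 'a::field \<Rightarrow> 'a" where
  "trace2 T x = (\<Sum>i<T. x ^ (2 ^ i))"

definition primitive_element :: "'a::field \<Rightarrow> bool" where
  "primitive_element a \<longleftrightarrow> a \<noteq> 0 \<and> (\<forall>x. x \<noteq> 0 \<longrightarrow> (\<exists>k::nat. x = a ^ k))"

definition coords :: "'a::field \<Rightarrow> nat \<Rightarrow> 'a \<Rightarrow> nat \<Rightarrow> bit" where
  "coords a T x = (THE c. (\<forall>j\<ge>T. c j = 0) \<and> x = (\<Sum>j<T. of_bit (c j) * a ^ j))"

text \<open>The binary matrix U_f for f(x) = f0 x: row r = k*Mt + m (k \<le> nu, m < Mt) is the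
  coordinate vector of a^k * f(xi^m), where xi = a^(nu+1).\<close>
definition U_mat :: "'a::field \<Rightarrow> nat \<Rightarrow> nat \<Rightarrow> nat \<Rightarrow> 'a \<Rightarrow> bit mat" where
  "U_mat a T nu Mt f0 = mat ((nu + 1) * Mt) T
     (\<lambda>(r, j). coords a T (a ^ (r div Mt) * (f0 * (a ^ (nu + 1)) ^ (r mod Mt))) j)"

end

theory Submission
  imports Defs "HOL-Library.Function_Algebras"
begin

text \<open>The dual basis identities \<open>Tr(\<theta>\<^sub>i \<alpha>\<^sup>j) = \<delta>\<^sub>i\<^sub>j\<close> make \<open>x \<mapsto> (Tr(\<theta>\<^sub>i x))\<^sub>i\<^sub><\<^sub>T\<close> the
  coordinate map for the basis \<open>\<alpha>\<^sup>0, \<dots>, \<alpha>\<^sup>T\<^sup>-\<^sup>1\<close>, so coordinates are \<open>\<bbbF>\<^sub>2\<close>-linear.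
  Then S is the kernel of an additive map into \<open>\<nu> M\<^sub>t\<close> bits, hence
  \<open>|S| \<ge> 2\<^sup>T / 2\<^sup>\<nu>\<^sup>M\<^sup>t\<close>. For the rank, row \<open>k M\<^sub>t + m\<close> of \<open>U\<^sub>f\<close> holds the coordinates of
  \<open>f\<^sub>0 \<alpha>\<^sup>k\<^sup>+\<^sup>(\<^sup>\<nu>\<^sup>+\<^sup>1\<^sup>)\<^sup>m\<close>; these exponents are distinct and below \<open>T\<close>, so the vector of
  coordinates at position \<open>e\<close> of \<open>f\<^sub>0\<^sup>-\<^sup>1 \<alpha>\<^sup>j\<close> (\<open>j < T\<close>) is mapped by \<open>U\<^sub>f\<close> to the unit vector
  of the row with exponent \<open>e\<close>, and \<open>U\<^sub>f\<close> has full row rank.\<close>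

lemma bit_cases: "(b::bit) = 0 \<or> b = 1"
  by (metis bit_not_zero_iff)

lemma add_self_CHAR_2:
  assumes "CHAR('a::ring_1) = 2"
  shows "(x::'a) + x = 0"
  using minus_CHAR_2[OF assms, of x x] by simp

lemma power_two_power_add_CHAR_2:
  assumes "CHAR('a::comm_ring_1) = 2"
  shows "((x::'a) + y) ^ (2 ^ i) = x ^ (2 ^ i) + y ^ (2 ^ i)"
proof (induction i)
  case (Suc i)
  have two: "(2::'a) = 0"
    using of_nat_CHAR[where 'a='a] assms by simp
  have "(x + y) ^ (2 ^ Suc i) = ((x + y) ^ (2 ^ i))\<^sup>2"
    by (simp add: power_mult[symmetric] mult.commute)
  also have "\<dots> = (x ^ (2 ^ i))\<^sup>2 + (y ^ (2 ^ i))\<^sup>2"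
    by (simp add: Suc power2_sum two)
  also have "\<dots> = x ^ (2 ^ Suc i) + y ^ (2 ^ Suc i)"
    by (simp add: power_mult[symmetric] mult.commute)
  finally show ?case .
qed simp

lemma trace2_add:
  assumes "CHAR('a::field) = 2"
  shows "trace2 T ((x::'a) + y) = trace2 T x + trace2 T y"
  unfolding trace2_def by (simp add: power_two_power_add_CHAR_2[OF assms] sum.distrib)

lemma trace2_zero [simp]: "trace2 T (0::'a::field) = 0"
  unfolding trace2_def by simp

lemma trace2_sum:
  assumes "CHAR('a::field) = 2"
  shows "trace2 T (\<Sum>j\<in>A. g j) = (\<Sum>j\<in>A. trace2 T (g j :: 'a))"
  by (induction A rule: infinite_finite_induct) (simp_all add: trace2_add[OF assms])

lemma trace2_of_bit_mult: "trace2 T (of_bit b * x) = of_bit b * trace2 T (x::'a::field)"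
  using bit_cases[of b] by auto

lemma of_bit_add_CHAR_2:
  assumes "CHAR('a::ring_1) = 2"
  shows "(of_bit (a + b) :: 'a) = of_bit a + of_bit b"
  using bit_cases[of a] bit_cases[of b] by (auto simp: add_self_CHAR_2[OF assms])

lemma of_bit_sum_CHAR_2:
  assumes "CHAR('a::ring_1) = 2"
  shows "(of_bit (\<Sum>j\<in>A. g j) :: 'a) = (\<Sum>j\<in>A. of_bit (g j))"
proof (induction A rule: infinite_finite_induct)
  case (insert x F)
  then show ?case
    by (simp only: sum.insert[OF insert(1,2)] of_bit_add_CHAR_2[OF assms] insert(3))
qed simp_all

lemma of_bit_mult: "(of_bit (a * b) :: 'a::semiring_1) = of_bit a * of_bit b"
  using bit_cases[of a] bit_cases[of b] by auto

lemma of_bit_eq_iff: "(of_bit a :: 'a::{semiring_1,zero_neq_one}) = of_bit b \<longleftrightarrow> a = b"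
  using bit_cases[of a] bit_cases[of b] by auto

lemma of_bit_eq_0_iff: "(of_bit b :: 'a::{semiring_1,zero_neq_one}) = 0 \<longleftrightarrow> b = 0"
  using bit_cases[of b] by auto

lemma UNIV_bit: "(UNIV :: bit set) = {0, 1}"
  by (auto intro: bit_not_zero_iff[THEN iffD1])

lemma card_funs_zero_outside:
  assumes "finite I"
  shows "card {f :: 'a \<Rightarrow> 'b::zero. \<forall>x. x \<notin> I \<longrightarrow> f x = 0} = card (UNIV :: 'b set) ^ card I"
    (is "card ?Z = _")
proof -
  define extend :: "('a \<Rightarrow> 'b) \<Rightarrow> 'a \<Rightarrow> 'b" where "extend g x = (if x \<in> I then g x else 0)" for g x
  have "inj_on extend (PiE I (\<lambda>_. UNIV))"
  proof (rule inj_onI)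
    fix g h assume g: "g \<in> PiE I (\<lambda>_. UNIV)" and h: "h \<in> PiE I (\<lambda>_. UNIV)"
      and eq: "extend g = extend h"
    show "g = h"
    proof (rule PiE_ext[OF g h])
      fix x assume "x \<in> I"
      then show "g x = h x" using fun_cong[OF eq, of x] by (simp add: extend_def)
    qed
  qed
  moreover have "extend ` PiE I (\<lambda>_. UNIV) = ?Z"
  proof (intro equalityI subsetI)
    fix f assume "f \<in> ?Z"
    then have "f = extend (restrict f I)"
      by (auto simp: extend_def fun_eq_iff)
    moreover have "restrict f I \<in> PiE I (\<lambda>_. UNIV)"
      by simp
    ultimately show "f \<in> extend ` PiE I (\<lambda>_. UNIV)"
      by (simp only: image_eqI)
  qed (auto simp: extend_def)
  ultimately have "card ?Z = card (PiE I (\<lambda>_. UNIV :: 'b set))"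
    using card_image by fastforce
  also have "\<dots> = card (UNIV :: 'b set) ^ card I"
    using assms by (simp add: card_PiE)
  finally show ?thesis .
qed

text \<open>For a right inverse \<open>r\<close> of \<open>\<phi>\<close>, \<open>x \<mapsto> (\<phi> x, x - r (\<phi> x))\<close> is injective.\<close>
lemma card_le_card_image_mult_card_kernel:
  fixes \<phi> :: "'a::{group_add,finite} \<Rightarrow> 'b::group_add"
  assumes add: "\<And>x y. \<phi> (x + y) = \<phi> x + \<phi> y"
    and range: "range \<phi> \<subseteq> B" and "finite B"
  shows "card (UNIV :: 'a set) \<le> card B * card {x. \<phi> x = 0}"
proof -
  define r where "r v = (SOME x. \<phi> x = v)" for v
  have r: "\<phi> (r (\<phi> x)) = \<phi> x" for x
    unfolding r_def by (rule someI) (rule refl)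
  have diff: "\<phi> (x - y) = \<phi> x - \<phi> y" for x y
    using add[of "x - y" y] by (simp add: eq_diff_eq)
  define h where "h x = (\<phi> x, x - r (\<phi> x))" for x
  have "inj h"
  proof (rule injI)
    fix x y assume "h x = h y"
    then show "x = y"
      by (auto simp: h_def) (metis diff_add_cancel)
  qed
  moreover have "range h \<subseteq> B \<times> {x. \<phi> x = 0}"
    using range by (auto simp: h_def diff r)
  ultimately have "card (UNIV :: 'a set) \<le> card (B \<times> {x. \<phi> x = 0})"
    using \<open>finite B\<close> by (intro card_inj_on_le) (auto intro: inj_on_subset)
  then show ?thesis
    by (simp add: card_cartesian_product)
qed

lemma log2_div_ge_of_two_power_le:
  fixes T k c :: nat
  assumes "0 < T" and le: "2 ^ T \<le> 2 ^ k * c"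
  shows "1 - real k / real T \<le> log 2 (real c) / real T"
proof -
  have "0 < c"
    using le by (cases c) auto
  have le_real: "(2::real) ^ T \<le> 2 ^ k * real c"
    using of_nat_le_iff[THEN iffD2, OF le] by simp
  have "real T = log 2 (2 ^ T)"
    by (simp add: log_nat_power)
  also have "\<dots> \<le> log 2 (2 ^ k * real c)"
    using le_real \<open>0 < c\<close> by (subst log_le_cancel_iff) auto
  also have "\<dots> = real k + log 2 (real c)"
    using \<open>0 < c\<close> by (simp add: log_mult log_nat_power)
  finally have "(real T - real k) / real T \<le> log 2 (real c) / real T"
    by (intro divide_right_mono) simp_all
  then show ?thesis
    using \<open>0 < T\<close> by (simp add: diff_divide_distrib)
qed

lemma (in vec_space) mult_mat_vec_in_span_cols:
  assumes A: "A \<in> carrier_mat n nc" and v: "v \<in> carrier_vec nc"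
  shows "A *\<^sub>v v \<in> span (set (cols A))"
proof -
  have cols: "set (cols A) \<subseteq> carrier_vec n"
    using A cols_dim by blast
  have dims: "\<forall>w\<in>set (cols A). dim_vec w = n"
    using cols by auto
  have "mat_of_cols n (cols A) = A" and "vec (length (cols A)) (\<lambda>i. v $ i) = v"
    using A v by auto
  then have "lincomb_list (\<lambda>i. v $ i) (cols A) = A *\<^sub>v v"
    using lincomb_list_as_mat_mult[OF dims, of "\<lambda>i. v $ i"] by simp
  then have "A *\<^sub>v v \<in> span_list (cols A)"
    unfolding span_list_def by (metis (mono_tags) mem_Collect_eq)
  then show ?thesis
    using span_list_as_span[OF cols] by simp
qed

lemma (in vec_space) rank_eq_if_unit_vecs_in_image:
  assumes A: "A \<in> carrier_mat n nc"
    and unit: "\<And>i. i < n \<Longrightarrow> \<exists>v\<in>carrier_vec nc. A *\<^sub>v v = unit_vec n i"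
  shows "rank A = n"
proof -
  have cols: "set (cols A) \<subseteq> carrier_vec n"
    using A cols_dim by blast
  have "set (unit_vecs n) \<subseteq> span (set (cols A))"
    using unit mult_mat_vec_in_span_cols[OF A] by (force simp: unit_vecs_def)
  then have "span (set (unit_vecs n)) \<subseteq> span (set (cols A))"
    by (intro span_subsetI cols)
  then have "span_vs (set (cols A)) = V"
    using span_unit_vecs_is_carrier span_is_subset2[OF cols] by auto
  then show ?thesis
    unfolding rank_def using dim_is_n by simp
qed

lemma transposed_index_less:
  fixes n m r :: nat
  assumes "r < n * m"
  shows "r div m + n * (r mod m) < n * m"
proof -
  have "0 < m"
    using assms by (cases m) auto
  have "r div m < n"
    using assms by (simp add: less_mult_imp_div_less)
  moreover have "n * (r mod m) + n \<le> n * m"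
    using mult_le_mono2[of "Suc (r mod m)" m n] \<open>0 < m\<close> by (simp add: Suc_le_eq)
  ultimately show ?thesis
    by linarith
qed

lemma inj_on_transposed_index:
  fixes n m :: nat
  shows "inj_on (\<lambda>r. r div m + n * (r mod m)) {..<n * m}"
proof (rule inj_onI)
  fix r s assume r: "r \<in> {..<n * m}" and s: "s \<in> {..<n * m}"
    and eq: "r div m + n * (r mod m) = s div m + n * (s mod m)"
  have "r div m < n" "s div m < n"
    using r s by (simp_all add: less_mult_imp_div_less)
  then have "r div m = s div m" and "r mod m = s mod m"
    using arg_cong[OF eq, of "\<lambda>x. x mod n"] arg_cong[OF eq, of "\<lambda>x. x div n"] by simp_all
  then show "r = s"
    using div_mult_mod_eq[of r m] div_mult_mod_eq[of s m] by metis
qed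

locale trace_dual_basis =
  fixes T :: nat and \<alpha> :: "'a::{field,finite}" and \<theta> :: "nat \<Rightarrow> 'a"
  assumes CHAR_2: "CHAR('a) = 2"
    and card_UNIV: "card (UNIV :: 'a set) = 2 ^ T"
    and trace_dual: "\<forall>i<T. \<forall>j<T. trace2 T (\<theta> i * \<alpha> ^ j) = (if i = j then 1 else 0)"
begin

text \<open>Sums of \<open>of_bit\<close> terms are rewritten with \<open>simp only\<close>: the default simp set
  turns them into cardinalities of sets of indices.\<close>

definition from_coords :: "(nat \<Rightarrow> bit) \<Rightarrow> 'a" where
  "from_coords c = (\<Sum>j<T. of_bit (c j) * \<alpha> ^ j)"

lemma trace2_dual_from_coords:
  assumes "i < T"
  shows "trace2 T (\<theta> i * from_coords c) = of_bit (c i)"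
proof -
  have "trace2 T (\<theta> i * from_coords c) = (\<Sum>j<T. of_bit (c j) * trace2 T (\<theta> i * \<alpha> ^ j))"
    unfolding from_coords_def
    by (simp only: sum_distrib_left trace2_sum[OF CHAR_2] mult.left_commute[of "\<theta> i"]
        trace2_of_bit_mult)
  also have "\<dots> = (\<Sum>j<T. if j = i then of_bit (c i) else 0)"
    using trace_dual assms by (intro sum.cong) auto
  also have "\<dots> = of_bit (c i)"
    using assms by simp
  finally show ?thesis .
qed

lemma inj_on_from_coords: "inj_on from_coords {c. \<forall>j\<ge>T. c j = 0}"
proof (rule inj_onI)
  fix c d assume c: "c \<in> {c. \<forall>j\<ge>T. c j = 0}" and d: "d \<in> {c. \<forall>j\<ge>T. c j = 0}"
    and eq: "from_coords c = from_coords d"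
  show "c = d"
  proof
    fix i show "c i = d i"
    proof (cases "i < T")
      case True
      have "(of_bit (c i) :: 'a) = trace2 T (\<theta> i * from_coords c)"
        using True by (rule trace2_dual_from_coords[symmetric])
      also have "\<dots> = of_bit (d i)"
        using True eq by (simp only: trace2_dual_from_coords)
      finally show ?thesis
        by (simp only: of_bit_eq_iff)
    qed (use c d in auto)
  qed
qed

lemma from_coords_surj: "from_coords ` {c. \<forall>j\<ge>T. c j = 0} = UNIV"
proof -
  have "card {c :: nat \<Rightarrow> bit. \<forall>j\<ge>T. c j = 0} = card (UNIV :: bit set) ^ card {..<T}"
    using card_funs_zero_outside[of "{..<T}", where 'b = bit] by (simp add: not_less)
  then have "card {c :: nat \<Rightarrow> bit. \<forall>j\<ge>T. c j = 0} = 2 ^ T"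
    by (simp add: UNIV_bit numeral_2_eq_2)
  then have "card (from_coords ` {c. \<forall>j\<ge>T. c j = 0}) = card (UNIV :: 'a set)"
    using card_image[OF inj_on_from_coords] card_UNIV by simp
  then show ?thesis
    by (simp add: card_subset_eq)
qed

lemma coords_expansion:
  "(\<forall>j\<ge>T. coords \<alpha> T x j = 0) \<and> from_coords (coords \<alpha> T x) = x"
proof -
  have "x \<in> from_coords ` {c. \<forall>j\<ge>T. c j = 0}"
    by (simp only: from_coords_surj UNIV_I)
  then obtain c where c: "c \<in> {c. \<forall>j\<ge>T. c j = 0}" and x: "x = from_coords c"
    by (rule imageE)
  have "\<exists>!c. (\<forall>j\<ge>T. c j = 0) \<and> x = from_coords c"
  proof (rule ex1I[of _ c])
    show "(\<forall>j\<ge>T. c j = 0) \<and> x = from_coords c"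
      using c x by blast
    fix d assume d: "(\<forall>j\<ge>T. d j = 0) \<and> x = from_coords d"
    show "d = c"
      using d x by (intro inj_onD[OF inj_on_from_coords _ _ c]) simp_all
  qed
  then have "(\<forall>j\<ge>T. coords \<alpha> T x j = 0) \<and> x = from_coords (coords \<alpha> T x)"
    unfolding coords_def from_coords_def by (rule theI')
  then show ?thesis
    by (elim conjE) (intro conjI, assumption, rule sym)
qed

lemma of_bit_coords: "i < T \<Longrightarrow> of_bit (coords \<alpha> T x i) = trace2 T (\<theta> i * x)"
  using trace2_dual_from_coords[of i "coords \<alpha> T x"] coords_expansion[of x] by simp

lemma coords_add: "coords \<alpha> T (x + y) i = coords \<alpha> T x i + coords \<alpha> T y i"
proof (cases "i < T")
  case True
  have "(of_bit (coords \<alpha> T (x + y) i) :: 'a) = trace2 T (\<theta> i * (x + y))"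
    using True by (rule of_bit_coords)
  also have "\<dots> = trace2 T (\<theta> i * x) + trace2 T (\<theta> i * y)"
    by (simp only: distrib_left trace2_add[OF CHAR_2])
  also have "\<dots> = of_bit (coords \<alpha> T x i + coords \<alpha> T y i)"
    using True by (simp only: of_bit_coords of_bit_add_CHAR_2[OF CHAR_2])
  finally show ?thesis
    by (simp only: of_bit_eq_iff)
qed (use coords_expansion in auto)

lemma coords_power:
  assumes "e < T" and "k < T"
  shows "coords \<alpha> T (\<alpha> ^ e) k = (if e = k then 1 else 0)"
proof -
  have "(of_bit (coords \<alpha> T (\<alpha> ^ e) k) :: 'a) = trace2 T (\<theta> k * \<alpha> ^ e)"
    using assms(2) by (rule of_bit_coords)
  also have "\<dots> = of_bit (if e = k then 1 else 0)"
    using assms trace_dual by (cases "e = k") simp_all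
  finally show ?thesis
    by (simp only: of_bit_eq_iff)
qed

lemma coords_mult:
  assumes "k < T"
  shows "coords \<alpha> T (g * y) k = (\<Sum>j<T. coords \<alpha> T y j * coords \<alpha> T (g * \<alpha> ^ j) k)"
proof -
  have rearrange: "(\<Sum>j<T. a j * (\<theta> k * (g * \<alpha> ^ j))) = \<theta> k * (g * (\<Sum>j<T. a j * \<alpha> ^ j))"
    for a :: "nat \<Rightarrow> 'a"
    by (simp add: sum_distrib_left mult.left_commute)
  have "(of_bit (\<Sum>j<T. coords \<alpha> T y j * coords \<alpha> T (g * \<alpha> ^ j) k) :: 'a)
      = (\<Sum>j<T. of_bit (coords \<alpha> T y j) * trace2 T (\<theta> k * (g * \<alpha> ^ j)))"
    using assms by (simp only: of_bit_sum_CHAR_2[OF CHAR_2] of_bit_mult of_bit_coords)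
  also have "\<dots> = trace2 T (\<Sum>j<T. of_bit (coords \<alpha> T y j) * (\<theta> k * (g * \<alpha> ^ j)))"
    by (simp only: trace2_sum[OF CHAR_2] trace2_of_bit_mult)
  also have "\<dots> = trace2 T (\<theta> k * (g * from_coords (coords \<alpha> T y)))"
    unfolding from_coords_def by (simp only: rearrange)
  also have "\<dots> = of_bit (coords \<alpha> T (g * y) k)"
    using assms by (simp only: coords_expansion of_bit_coords)
  finally show ?thesis
    by (simp only: of_bit_eq_iff)
qed

lemma trace2_dual_eq_0_iff:
  assumes "i < T"
  shows "trace2 T (\<theta> i * x) = 0 \<longleftrightarrow> coords \<alpha> T x i = 0"
proof -
  have "trace2 T (\<theta> i * x) = of_bit (coords \<alpha> T x i)"
    using assms by (rule of_bit_coords[symmetric])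
  then show ?thesis
    by (simp only: of_bit_eq_0_iff)
qed

lemma two_power_le_card_trace_kernel:
  fixes w :: "nat \<Rightarrow> 'a" and I :: "(nat \<times> nat) set"
  assumes "finite I" and I: "\<And>i j. (i, j) \<in> I \<Longrightarrow> i < T"
  shows "2 ^ T \<le> 2 ^ card I * card {x. \<forall>(i, j)\<in>I. trace2 T (\<theta> i * (x * w j)) = 0}"
proof -
  define \<phi> :: "'a \<Rightarrow> nat \<times> nat \<Rightarrow> bit" where
    "\<phi> x p = (if p \<in> I then coords \<alpha> T (x * w (snd p)) (fst p) else 0)" for x p
  define B where "B = {f :: nat \<times> nat \<Rightarrow> bit. \<forall>p. p \<notin> I \<longrightarrow> f p = 0}"
  have card_B: "card B = 2 ^ card I"
    unfolding B_def using card_funs_zero_outside[OF \<open>finite I\<close>, where 'b = bit]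
    by (simp add: UNIV_bit numeral_2_eq_2)
  have "\<phi> (x + y) = \<phi> x + \<phi> y" for x y
    by (rule ext) (simp add: \<phi>_def distrib_right coords_add)
  moreover have "range \<phi> \<subseteq> B"
    by (auto simp: \<phi>_def B_def)
  moreover have "finite B"
    using card_B by (intro card_ge_0_finite) simp
  moreover have "{x. \<phi> x = 0} = {x. \<forall>(i, j)\<in>I. trace2 T (\<theta> i * (x * w j)) = 0}"
    by (auto simp: \<phi>_def fun_eq_iff trace2_dual_eq_0_iff I)
  ultimately show ?thesis
    using card_le_card_image_mult_card_kernel[of \<phi> B] card_UNIV card_B by simp
qed

lemma U_mat_entry:
  assumes "r < (nu + 1) * Mt" and "j < T"
  shows "U_mat \<alpha> T nu Mt f0 $$ (r, j) = coords \<alpha> T (f0 * \<alpha> ^ (r div Mt + (nu + 1) * (r mod Mt))) j"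
proof -
  have "U_mat \<alpha> T nu Mt f0 $$ (r, j)
      = coords \<alpha> T (\<alpha> ^ (r div Mt) * (f0 * (\<alpha> ^ (nu + 1)) ^ (r mod Mt))) j"
    using assms by (simp add: U_mat_def)
  also have "\<alpha> ^ (r div Mt) * (f0 * (\<alpha> ^ (nu + 1)) ^ (r mod Mt))
      = f0 * \<alpha> ^ (r div Mt + (nu + 1) * (r mod Mt))"
    by (simp only: power_add power_mult mult.left_commute)
  finally show ?thesis .
qed

lemma rank_U_mat:
  assumes T: "(nu + 1) * Mt \<le> T" and "f0 \<noteq> 0"
  shows "vec_space.rank ((nu + 1) * Mt) (U_mat \<alpha> T nu Mt f0) = (nu + 1) * Mt"
proof (rule vec_space.rank_eq_if_unit_vecs_in_image)
  let ?n = "(nu + 1) * Mt" and ?U = "U_mat \<alpha> T nu Mt f0"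
  define e where "e r = r div Mt + (nu + 1) * (r mod Mt)" for r
  have e_less: "e r < T" if "r < ?n" for r
    using transposed_index_less[OF that] T unfolding e_def by simp
  show "?U \<in> carrier_mat ?n T"
    by (simp add: U_mat_def)
  fix i assume i: "i < ?n"
  define v where "v = vec T (\<lambda>j. coords \<alpha> T (inverse f0 * \<alpha> ^ j) (e i))"
  have "?U *\<^sub>v v = unit_vec ?n i"
  proof (rule eq_vecI)
    fix r assume "r < dim_vec (unit_vec ?n i)"
    then have r: "r < ?n"
      by simp
    have dims: "dim_row ?U = ?n" "dim_col ?U = T"
      by (simp_all add: U_mat_def)
    have "(?U *\<^sub>v v) $ r = (\<Sum>j\<in>{0..<T}. row ?U r $ j * v $ j)"
      using r dims by (simp only: index_mult_mat_vec scalar_prod_def v_def dim_vec)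
    also have "\<dots> = (\<Sum>j<T. coords \<alpha> T (f0 * \<alpha> ^ e r) j * coords \<alpha> T (inverse f0 * \<alpha> ^ j) (e i))"
    proof (rule sum.cong)
      fix j assume "j \<in> {..<T}"
      then show "row ?U r $ j * v $ j
          = coords \<alpha> T (f0 * \<alpha> ^ e r) j * coords \<alpha> T (inverse f0 * \<alpha> ^ j) (e i)"
        using r dims by (simp only: lessThan_iff index_row U_mat_entry e_def v_def index_vec)
    qed (simp only: atLeast0LessThan)
    also have "\<dots> = coords \<alpha> T (inverse f0 * (f0 * \<alpha> ^ e r)) (e i)"
      using e_less[OF i] by (rule coords_mult[symmetric])
    also have "\<dots> = coords \<alpha> T (\<alpha> ^ e r) (e i)"
      using \<open>f0 \<noteq> 0\<close> by (simp only: mult.assoc[symmetric] left_inverse mult_1_left not_False_eq_True)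
    also have "\<dots> = (if e r = e i then 1 else 0)"
      using e_less[OF r] e_less[OF i] by (rule coords_power)
    also have "\<dots> = unit_vec ?n i $ r"
      using inj_on_eq_iff[OF inj_on_transposed_index[where n = "nu + 1" and m = Mt], of r i] r i
      by (simp add: e_def)
    finally show "(?U *\<^sub>v v) $ r = unit_vec ?n i $ r" .
  qed (simp add: U_mat_def)
  then show "\<exists>v\<in>carrier_vec T. ?U *\<^sub>v v = unit_vec ?n i"
    by (auto simp: v_def)
qed

end

theorem theorem7:
  fixes T nu Mt :: nat
    and \<alpha> :: "'a::{field, finite}"
    and \<theta> :: "nat \<Rightarrow> 'a"
  assumes char2: "CHAR('a) = 2"
    and card: "card (UNIV :: 'a set) = 2 ^ T"
    and Mt_pos: "Mt \<ge> 1"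
    and T_ge: "T \<ge> Mt * (nu + 1)"
    and prim: "primitive_element \<alpha>"
    and dual: "\<forall>i<T. \<forall>j<T. trace2 T (\<theta> i * \<alpha> ^ j) = (if i = j then 1 else 0)"
  defines "S \<equiv> {f0 :: 'a. \<forall>i\<in>{T - nu..T - 1}. \<forall>j\<in>{1..Mt}. trace2 T (\<theta> i * (f0 * (\<alpha> ^ (nu + 1)) ^ j)) = 0}"
  shows "log 2 (real (card S)) / real T \<ge> 1 - real nu * real Mt / real T
    \<and> (\<forall>f0\<in>S. f0 \<noteq> 0 \<longrightarrow> vec_space.rank ((nu + 1) * Mt) (U_mat \<alpha> T nu Mt f0) \<ge> Mt * (nu + 1))"
proof -
  interpret trace_dual_basis T \<alpha> \<theta>
    using char2 card dual by unfold_locales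
  have "nu + 1 \<le> T"
    using Mt_pos T_ge mult_le_mono1[of 1 Mt "nu + 1"] by simp
  let ?I = "{T - nu..T - 1} \<times> {1..Mt}"
  have "S = {x. \<forall>(i, j)\<in>?I. trace2 T (\<theta> i * (x * (\<alpha> ^ (nu + 1)) ^ j)) = 0}"
    unfolding S_def by auto
  moreover have "card ?I = nu * Mt"
    using \<open>nu + 1 \<le> T\<close> by (simp add: card_cartesian_product)
  moreover have "2 ^ T \<le> 2 ^ card ?I
      * card {x. \<forall>(i, j)\<in>?I. trace2 T (\<theta> i * (x * (\<alpha> ^ (nu + 1)) ^ j)) = 0}"
    using \<open>nu + 1 \<le> T\<close> by (intro two_power_le_card_trace_kernel[where w = "\<lambda>j. (\<alpha> ^ (nu + 1)) ^ j"]) auto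
  ultimately have "1 - real (nu * Mt) / real T \<le> log 2 (real (card S)) / real T"
    using \<open>nu + 1 \<le> T\<close> by (intro log2_div_ge_of_two_power_le) auto
  moreover have "vec_space.rank ((nu + 1) * Mt) (U_mat \<alpha> T nu Mt f0) \<ge> Mt * (nu + 1)"
    if "f0 \<noteq> 0" for f0
    using rank_U_mat[of nu Mt, OF _ that] T_ge by (simp add: mult.commute)
  ultimately show ?thesis
    by simp
qed

end
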